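(* The statement "not every subobject of $\mathbb{N}$ is countable" is valid in $\mathsf{RT}(\mathcal{K}_2)$.
   Context: $\mathsf{RT}(\mathcal{K}_2)$ is the function realizability topos (realizability topos over Kleene's second partial combinatory algebra $\mathcal{K}_2$), with intuitionistic internal language; the statement quantifies internally over the power object of $\mathbb{N}$. A set $X$ is countable if there is a surjection $\mathbb{N} \to X+1$. *)

theory Defs
  imports "HOL-Library.Nat_Bijection"
begin

type_synonym baire = "nat \<Rightarrow> nat"

definition K2_app :: "baire \<Rightarrow> baire \<Rightarrow> baire option" where
  "K2_app a b =
     (if \<forall>n. \<exists>k. 0 < a (list_encode (n # map b [0..<k]))
      then Some (\<lambda>n. a (list_encode (n # map b
              [0..<(LEAST k. 0 < a (list_encode (n # map b [0..<k])))])) - 1)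
      else None)"

definition K2_fst :: "baire \<Rightarrow> baire" where "K2_fst e = (\<lambda>n. e (2 * n))"
definition K2_snd :: "baire \<Rightarrow> baire" where "K2_snd e = (\<lambda>n. e (2 * n + 1))"
definition K2_tl :: "baire \<Rightarrow> baire" where "K2_tl e = (\<lambda>n. e (Suc n))"
definition K2_num :: "nat \<Rightarrow> baire" where "K2_num n = (\<lambda>_. n)"

type_synonym rprop = "baire set"

definition r_imp :: "rprop \<Rightarrow> rprop \<Rightarrow> rprop" where
  "r_imp P Q = {e. \<forall>a\<in>P. \<exists>b. K2_app e a = Some b \<and> b \<in> Q}"

definition r_false :: rprop where "r_false = {}"

definition r_not :: "rprop \<Rightarrow> rprop" where "r_not P = r_imp P r_false"

definition r_and :: "rprop \<Rightarrow> rprop \<Rightarrow> rprop" where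
  "r_and P Q = {e. K2_fst e \<in> P \<and> K2_snd e \<in> Q}"

definition r_or :: "rprop \<Rightarrow> rprop \<Rightarrow> rprop" where
  "r_or P Q = {e. (e 0 = 0 \<and> K2_tl e \<in> P) \<or> (e 0 \<noteq> 0 \<and> K2_tl e \<in> Q)}"

definition r_eq :: "nat \<Rightarrow> nat \<Rightarrow> rprop" where
  "r_eq n m = (if n = m then UNIV else {})"

definition r_all_nat :: "(nat \<Rightarrow> rprop) \<Rightarrow> rprop" where
  "r_all_nat F = {e. \<forall>n. \<exists>b. K2_app e (K2_num n) = Some b \<and> b \<in> F n}"

definition r_ex_nat :: "(nat \<Rightarrow> rprop) \<Rightarrow> rprop" where
  "r_ex_nat F = {e. \<exists>n. K2_fst e = K2_num n \<and> K2_snd e \<in> F n}"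

text \<open>Quantifiers over power objects P(X) of discrete objects X (here N and N x N):
  subobjects are arbitrary realizability predicates X \<Rightarrow> rprop; quantification is uniform.\<close>
definition r_all_pow :: "(('x \<Rightarrow> rprop) \<Rightarrow> rprop) \<Rightarrow> rprop" where
  "r_all_pow F = (\<Inter>A. F A)"

definition r_ex_pow :: "(('x \<Rightarrow> rprop) \<Rightarrow> rprop) \<Rightarrow> rprop" where
  "r_ex_pow F = (\<Union>A. F A)"

definition r_valid :: "rprop \<Rightarrow> bool" where
  "r_valid P \<longleftrightarrow> P \<noteq> {}"

text \<open>A + 1 is represented as the subobject of N: 0 is the extra point, Suc m stands for m in A.\<close>
definition in_A1 :: "(nat \<Rightarrow> rprop) \<Rightarrow> nat \<Rightarrow> rprop" where
  "in_A1 A y = r_or (r_eq y 0) (r_ex_nat (\<lambda>m. r_and (r_eq y (Suc m)) (A m)))"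

text \<open>"A is countable": there is a surjection N \<rightarrow> A + 1, i.e. a relation R \<subseteq> N \<times> (A+1)
  which is total, functional and surjective.\<close>
definition r_countable :: "(nat \<Rightarrow> rprop) \<Rightarrow> rprop" where
  "r_countable A = r_ex_pow (\<lambda>R :: nat \<times> nat \<Rightarrow> rprop.
     r_and
       (r_all_nat (\<lambda>n. r_ex_nat (\<lambda>y. r_and (R (n, y)) (in_A1 A y))))
     (r_and
       (r_all_nat (\<lambda>n. r_all_nat (\<lambda>y. r_all_nat (\<lambda>y'.
          r_imp (r_and (R (n, y)) (R (n, y'))) (r_eq y y')))))
       (r_all_nat (\<lambda>y. r_imp (in_A1 A y) (r_ex_nat (\<lambda>n. R (n, y)))))))"

end

theory Submission
  imports Defs
begin

text \<open>A realizer of the internal universal statement over the power object realizes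
  countability of every subobject at once. The enumeration part of such a realizer computes,
  on input n, the index of an element of A + 1 without looking at A. For A = \<emptyset> that index
  can only be the added point 0; for A = N surjectivity provides some n sent to 1, and
  functionality then forbids n from also being sent to 0. So the universal statement has
  no realizer, and its negation is realized by every code.\<close>

lemma K2_num_eq_iff [simp]: "K2_num a = K2_num b \<longleftrightarrow> a = b"
  unfolding K2_num_def by meson

definition K2_pair :: "baire \<Rightarrow> baire \<Rightarrow> baire" where
  "K2_pair x z = (\<lambda>k. if even k then x (k div 2) else z (k div 2))"

lemma K2_fst_pair [simp]: "K2_fst (K2_pair x z) = x"
  and K2_snd_pair [simp]: "K2_snd (K2_pair x z) = z"
  unfolding K2_pair_def K2_fst_def K2_snd_def by auto

lemma r_and_iff: "c \<in> r_and P Q \<longleftrightarrow> K2_fst c \<in> P \<and> K2_snd c \<in> Q"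
  unfolding r_and_def by simp

lemma r_and_pairI: "x \<in> P \<Longrightarrow> z \<in> Q \<Longrightarrow> K2_pair x z \<in> r_and P Q"
  by (simp add: r_and_iff)

lemma r_ex_nat_iff: "e \<in> r_ex_nat F \<longleftrightarrow> (\<exists>n. K2_fst e = K2_num n \<and> K2_snd e \<in> F n)"
  unfolding r_ex_nat_def by simp

lemma r_all_natE:
  assumes "e \<in> r_all_nat F"
  obtains b where "K2_app e (K2_num n) = Some b" "b \<in> F n"
  using assms unfolding r_all_nat_def by blast

lemma r_impE:
  assumes "e \<in> r_imp P Q" "a \<in> P"
  obtains b where "K2_app e a = Some b" "b \<in> Q"
  using assms unfolding r_imp_def by blast

lemma r_countableE:
  assumes "e \<in> r_countable A"
  obtains R :: "nat \<times> nat \<Rightarrow> rprop" where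
    "K2_fst e \<in> r_all_nat (\<lambda>n. r_ex_nat (\<lambda>y. r_and (R (n, y)) (in_A1 A y)))"
    "K2_fst (K2_snd e) \<in> r_all_nat (\<lambda>n. r_all_nat (\<lambda>y. r_all_nat (\<lambda>y'.
       r_imp (r_and (R (n, y)) (R (n, y'))) (r_eq y y'))))"
    "K2_snd (K2_snd e) \<in> r_all_nat (\<lambda>y. r_imp (in_A1 A y) (r_ex_nat (\<lambda>n. R (n, y))))"
  using assms unfolding r_countable_def r_ex_pow_def r_and_def by blast

lemma in_A1_empty_imp_zero: "c \<in> in_A1 (\<lambda>_. {}) y \<Longrightarrow> y = 0"
  unfolding in_A1_def r_or_def r_ex_nat_def r_and_def r_eq_def by (auto split: if_splits)

lemma in_A1_SucI:
  assumes "a \<in> A m"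
  shows "(\<lambda>k. if k = 0 then 1 else K2_pair (K2_num m) (K2_pair (K2_num 0) a) (k - 1))
           \<in> in_A1 A (Suc m)"
proof -
  have "(\<lambda>k. K2_pair (K2_num m) (K2_pair (K2_num 0) a) (Suc k - 1))
          = K2_pair (K2_num m) (K2_pair (K2_num 0) a)"
    by simp
  then show ?thesis
    using assms unfolding in_A1_def r_or_def K2_tl_def
    by (simp add: r_ex_nat_iff r_and_iff r_eq_def)
qed

lemma countable_empty_enumerates_only_zero:
  assumes "e \<in> r_countable (\<lambda>_. {})" and "K2_app (K2_fst e) (K2_num n) = Some b"
  shows "K2_fst b = K2_num 0"
proof -
  obtain R where tot: "K2_fst e \<in> r_all_nat (\<lambda>n. r_ex_nat (\<lambda>y.
      r_and (R (n, y)) (in_A1 (\<lambda>_. {}) y)))"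
    using assms(1) by (rule r_countableE)
  then obtain b' where "K2_app (K2_fst e) (K2_num n) = Some b'"
      "b' \<in> r_ex_nat (\<lambda>y. r_and (R (n, y)) (in_A1 (\<lambda>_. {}) y))"
    by (rule r_all_natE)
  with assms(2) obtain y where "K2_fst b = K2_num y" "K2_snd (K2_snd b) \<in> in_A1 (\<lambda>_. {}) y"
    by (auto simp: r_ex_nat_iff r_and_iff)
  then show ?thesis using in_A1_empty_imp_zero by blast
qed

lemma countable_enumerates_member:
  assumes "e \<in> r_countable A" and "a \<in> A m"
  obtains n b where "K2_app (K2_fst e) (K2_num n) = Some b" "K2_fst b = K2_num (Suc m)"
proof -
  obtain R where
    tot: "K2_fst e \<in> r_all_nat (\<lambda>n. r_ex_nat (\<lambda>y. r_and (R (n, y)) (in_A1 A y)))" and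
    fnc: "K2_fst (K2_snd e) \<in> r_all_nat (\<lambda>n. r_all_nat (\<lambda>y. r_all_nat (\<lambda>y'.
       r_imp (r_and (R (n, y)) (R (n, y'))) (r_eq y y'))))" and
    sur: "K2_snd (K2_snd e) \<in> r_all_nat (\<lambda>y. r_imp (in_A1 A y) (r_ex_nat (\<lambda>n. R (n, y))))"
    using assms(1) by (rule r_countableE)
  obtain s where "s \<in> r_imp (in_A1 A (Suc m)) (r_ex_nat (\<lambda>n. R (n, Suc m)))"
    using sur by (rule r_all_natE)
  then obtain d where "d \<in> r_ex_nat (\<lambda>n. R (n, Suc m))"
    using in_A1_SucI[where A = A, OF assms(2)] by (rule r_impE)
  then obtain n where hit: "K2_snd d \<in> R (n, Suc m)" by (auto simp: r_ex_nat_iff)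
  obtain b where b: "K2_app (K2_fst e) (K2_num n) = Some b"
      "b \<in> r_ex_nat (\<lambda>y. r_and (R (n, y)) (in_A1 A y))"
    using tot by (rule r_all_natE)
  then obtain y where y: "K2_fst b = K2_num y" "K2_fst (K2_snd b) \<in> R (n, y)"
    by (auto simp: r_ex_nat_iff r_and_iff)
  obtain f where "f \<in> r_imp (r_and (R (n, y)) (R (n, Suc m))) (r_eq y (Suc m))"
    using fnc by (auto elim!: r_all_natE)
  then obtain t where "t \<in> r_eq y (Suc m)"
    using r_and_pairI[OF y(2) hit] by (rule r_impE)
  then have "y = Suc m" by (simp add: r_eq_def split: if_splits)
  with b(1) y(1) show ?thesis using that by blast
qed

lemma r_all_pow_countable_empty: "r_all_pow (\<lambda>A :: nat \<Rightarrow> rprop. r_countable A) = {}"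
proof (intro equals0I)
  fix e assume "e \<in> r_all_pow (\<lambda>A :: nat \<Rightarrow> rprop. r_countable A)"
  then have empty: "e \<in> r_countable (\<lambda>_. {})" and full: "e \<in> r_countable (\<lambda>_. UNIV)"
    unfolding r_all_pow_def by blast+
  obtain n b where "K2_app (K2_fst e) (K2_num n) = Some b" "K2_fst b = K2_num (Suc 0)"
    using countable_enumerates_member[OF full, of "K2_num 0" 0] by blast
  with countable_empty_enumerates_only_zero[OF empty] show False by fastforce
qed

theorem corollary2p7:
  shows "r_valid (r_not (r_all_pow (\<lambda>A :: nat \<Rightarrow> rprop. r_countable A)))"
  unfolding r_valid_def r_not_def r_imp_def r_false_def r_all_pow_countable_empty by simp

end
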